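(* Let $\lambda\in\mathbb{R}$, let $n$ be a positive integer and let $k$ be a positive integer. Then \[ S_{k,\lambda}(n)=\frac{(n+1)_{k+1,\lambda}-(1)_{k+1,\lambda}}{k+1}-\frac{1}{k+1}\sum_{r=0}^{k-1}\binom{k+1}{r}(1)_{k+1-r,\lambda}\,S_{r,\lambda}(n). \]
   Context: For $\lambda\in\mathbb{R}$ the degenerate falling factorials are $(x)_{0,\lambda}=1$ and $(x)_{m,\lambda}=x(x-\lambda)(x-2\lambda)\cdots(x-(m-1)\lambda)$ for $m\ge 1$. For a nonnegative integer $r$ and positive integer $n$, $S_{r,\lambda}(n)=\sum_{j=1}^{n}(j)_{r,\lambda}=(1)_{r,\lambda}+(2)_{r,\lambda}+\cdots+(n)_{r,\lambda}$ (so in particular $S_{0,\lambda}(n)=n$). *)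

theory Defs
  imports Complex_Main
begin

definition dfall :: "real \<Rightarrow> nat \<Rightarrow> real \<Rightarrow> real" where
  "dfall x m lam = (\<Prod>i<m. (x - real i * lam))"

definition dsum :: "nat \<Rightarrow> real \<Rightarrow> nat \<Rightarrow> real" where
  "dsum r lam n = (\<Sum>j=1..n. dfall (real j) r lam)"

end

theory Submission
  imports Defs
begin

text \<open>The degenerate falling factorials satisfy the binomial theorem
  \<open>(x + y)_{m,\<lambda>} = \<Sum>_r C(m,r) (x)_{r,\<lambda>} (y)_{m-r,\<lambda>}\<close>. Taking \<open>x = j\<close>, \<open>y = 1\<close> and
  summing over \<open>j = 1..n\<close>, the left-hand side telescopes against the term \<open>r = m\<close>:
  \<open>(n+1)_{m,\<lambda>} - (1)_{m,\<lambda>} = \<Sum>_{r<m} C(m,r) (1)_{m-r,\<lambda>} S_{r,\<lambda>}(n)\<close>. For \<open>m = k + 1\<close>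
  the term \<open>r = k\<close> is \<open>(k + 1) S_{k,\<lambda>}(n)\<close>; solving for it gives the theorem.\<close>

lemma dfall_0 [simp]: "dfall x 0 lam = 1"
  by (simp add: dfall_def)

lemma dfall_1 [simp]: "dfall x (Suc 0) lam = x"
  by (simp add: dfall_def)

lemma dfall_Suc: "dfall x (Suc m) lam = dfall x m lam * (x - real m * lam)"
  by (simp add: dfall_def)

lemma sum_binomial_Suc:
  fixes f :: "nat \<Rightarrow> 'a::comm_semiring_1"
  shows "(\<Sum>r\<le>Suc m. of_nat (Suc m choose r) * f r)
    = (\<Sum>r\<le>m. of_nat (m choose r) * f (Suc r)) + (\<Sum>r\<le>m. of_nat (m choose r) * f r)"
proof -
  have shift_back: "f 0 + (\<Sum>r\<le>m. of_nat (m choose Suc r) * f (Suc r)) = (\<Sum>r\<le>m. of_nat (m choose r) * f r)"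
  proof -
    have "f 0 + (\<Sum>r\<le>m. of_nat (m choose Suc r) * f (Suc r)) = (\<Sum>r\<le>Suc m. of_nat (m choose r) * f r)"
      by (subst sum.atMost_Suc_shift) simp
    then show ?thesis
      by (simp add: binomial_eq_0)
  qed
  have "(\<Sum>r\<le>Suc m. of_nat (Suc m choose r) * f r)
      = (\<Sum>r\<le>m. of_nat (m choose r) * f (Suc r)) + (f 0 + (\<Sum>r\<le>m. of_nat (m choose Suc r) * f (Suc r)))"
    by (subst sum.atMost_Suc_shift) (simp add: distrib_left sum.distrib ac_simps)
  then show ?thesis
    by (simp only: shift_back)
qed

theorem dfall_binomial:
  "dfall (x + y) m lam = (\<Sum>r\<le>m. real (m choose r) * dfall x r lam * dfall y (m - r) lam)"
proof (induction m)
  case 0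
  show ?case by simp
next
  case (Suc m)
  define f where "f r = dfall x r lam * dfall y (Suc m - r) lam" for r
  have split: "dfall x r lam * dfall y (m - r) lam * (x + y - real m * lam) = f (Suc r) + f r"
    if "r \<le> m" for r
  proof -
    \<comment> \<open>\<open>x + y - m\<lambda> = (x - r\<lambda>) + (y - (m - r)\<lambda>)\<close> extends one factor or the other.\<close>
    have "Suc m - r = Suc (m - r)" and "real (m - r) = real m - real r"
      using that by simp_all
    then show ?thesis
      by (simp add: f_def dfall_Suc algebra_simps)
  qed
  have "dfall (x + y) (Suc m) lam
      = (\<Sum>r\<le>m. real (m choose r) * (dfall x r lam * dfall y (m - r) lam * (x + y - real m * lam)))"
    by (simp add: dfall_Suc Suc.IH sum_distrib_right mult.assoc)
  also have "\<dots> = (\<Sum>r\<le>m. real (m choose r) * f (Suc r)) + (\<Sum>r\<le>m. real (m choose r) * f r)"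
    by (simp add: split distrib_left sum.distrib)
  also have "\<dots> = (\<Sum>r\<le>Suc m. real (Suc m choose r) * f r)"
    by (rule sum_binomial_Suc [symmetric])
  finally show ?case
    by (simp add: f_def mult.assoc)
qed

lemma sum_dfall_shift:
  "(\<Sum>j=1..n. dfall (real j + 1) m lam) = (\<Sum>r\<le>m. real (m choose r) * dfall 1 (m - r) lam * dsum r lam n)"
proof -
  have "(\<Sum>j=1..n. dfall (real j + 1) m lam)
      = (\<Sum>j=1..n. \<Sum>r\<le>m. real (m choose r) * dfall 1 (m - r) lam * dfall (real j) r lam)"
    unfolding dfall_binomial by (simp add: ac_simps)
  also have "\<dots> = (\<Sum>r\<le>m. real (m choose r) * dfall 1 (m - r) lam * dsum r lam n)"
    by (subst sum.swap) (simp add: dsum_def sum_distrib_left)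
  finally show ?thesis .
qed

lemma dsum_recurrence:
  "dfall (real n + 1) m lam - dfall 1 m lam = (\<Sum>r<m. real (m choose r) * dfall 1 (m - r) lam * dsum r lam n)"
proof -
  have "dfall (real n + 1) m lam - dfall 1 m lam = (\<Sum>j=1..n. dfall (real j + 1) m lam - dfall (real j) m lam)"
    using sum_Suc_diff [of 1 n "\<lambda>j. dfall (real j) m lam"] by (simp add: add.commute)
  also have "\<dots> = (\<Sum>j=1..n. dfall (real j + 1) m lam) - dsum m lam n"
    by (simp add: sum_subtractf dsum_def)
  also have "\<dots> = (\<Sum>r<m. real (m choose r) * dfall 1 (m - r) lam * dsum r lam n)"
    unfolding sum_dfall_shift by (simp flip: lessThan_Suc_atMost)
  finally show ?thesis .
qed

theorem theorem2p3:
  fixes lam :: real and n k :: nat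
  assumes "n \<ge> 1" and "k \<ge> 1"
  shows "dsum k lam n =
    (dfall (real n + 1) (k + 1) lam - dfall 1 (k + 1) lam) / real (k + 1)
    - (1 / real (k + 1)) * (\<Sum>r=0..k-1. real ((k + 1) choose r) * dfall 1 (k + 1 - r) lam * dsum r lam n)"
proof -
  let ?diff = "dfall (real n + 1) (k + 1) lam - dfall 1 (k + 1) lam"
  let ?lower = "\<Sum>r=0..k-1. real ((k + 1) choose r) * dfall 1 (k + 1 - r) lam * dsum r lam n"
  have "{0..k-1} = {..<k}"
    using \<open>k \<ge> 1\<close> by auto
  then have "?diff = ?lower + real (k + 1) * dsum k lam n"
    using dsum_recurrence [of n "k + 1" lam] by simp
  then have "dsum k lam n = (?diff - ?lower) / real (k + 1)"
    by (simp add: eq_divide_eq mult.commute del: of_nat_Suc of_nat_add)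
  then show ?thesis
    by (simp add: diff_divide_distrib)
qed

end
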